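(* Let $A,B,C$ be nonzero integers, $f(X)=AX+B+\frac{C}{X}$, and let $T$ be an indeterminate. Then, in $\mathbb{Q}(T)$, the triple \[(x,y,z)=\left(T,\ -\frac{(AT^2+BT+C)B}{(AT^2+(B+1)T+C)A},\ -\frac{(AT^2+(B+1)T+C)C}{BT}\right)\] satisfies $f(x)f(y)=f(z)$, as does the triple \[(x,y,z)=\left(T,\ -\frac{(AT^2+(B+1)T+C)C}{(AT^2+BT+C)B},\ -\frac{(AT^2+(B+1)T+C)C}{BT}\right).\] *)

theory Defs
  imports "HOL-Computational_Algebra.Polynomial" "HOL-Computational_Algebra.Fraction_Field"
begin

type_synonym ratfun = "rat poly fract"

definition indetT :: ratfun where
  "indetT = Fract [:0, 1:] 1"

definition fA :: "int \<Rightarrow> int \<Rightarrow> int \<Rightarrow> ratfun \<Rightarrow> ratfun" where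
  "fA A B C X = of_int A * X + of_int B + of_int C / X"

end

theory Submission
  imports Defs "HOL-Computational_Algebra.Polynomial_Factorial"
begin

text \<open>Write \<open>f(X) = aX + b + c/X\<close>, \<open>P = aT\<^sup>2 + bT + c\<close> and \<open>Q = aT\<^sup>2 + (b + 1)T + c = P + T\<close>.
  Then \<open>f(T) = P/T\<close>, and the relation \<open>Q - P = T\<close> makes \<open>f(y) = bT/Q - acQ/(Pb)\<close> and
  \<open>f(z) = bP/Q - acQ/(bT)\<close>, so \<open>f(z) = f(T) f(y)\<close>. The second triple follows from the first
  because its \<open>y\<close> is \<open>c/(a y)\<close> for the first \<open>y\<close>, and \<open>X \<mapsto> c/(aX)\<close> leaves \<open>f\<close> invariant.\<close>

lemma laurent_quadratic_product_identity:
  fixes a b c t :: "'a::field"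
  defines "P \<equiv> a*t^2 + b*t + c" and "Q \<equiv> a*t^2 + (b + 1)*t + c"
  assumes "t \<noteq> 0" "a \<noteq> 0" "b \<noteq> 0" "c \<noteq> 0" "P \<noteq> 0" "Q \<noteq> 0"
  shows "(a*t + b + c/t) * (a*(-(P*b)/(Q*a)) + b + c/(-(P*b)/(Q*a)))
       = a*(-(Q*c)/(b*t)) + b + c/(-(Q*c)/(b*t))"
proof -
  have QP: "Q = P + t" unfolding P_def Q_def by (simp add: algebra_simps)
  have ft: "a*t + b + c/t = P/t"
    using assms(3) unfolding P_def by (simp add: field_simps power2_eq_square)
  have "b - P*b/Q = b*t/Q" and "b - b*t/Q = b*P/Q"
    using assms(8) unfolding QP by (simp_all add: field_simps)
  moreover have "a*(-(P*b)/(Q*a)) = -(P*b/Q)" and "c/(-(P*b)/(Q*a)) = -(a*c*Q/(P*b))"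
    and "a*(-(Q*c)/(b*t)) = -(a*c*Q/(b*t))" and "c/(-(Q*c)/(b*t)) = -(b*t/Q)"
    using assms(3-) by (simp_all add: field_simps)
  ultimately have fy: "a*(-(P*b)/(Q*a)) + b + c/(-(P*b)/(Q*a)) = b*t/Q - a*c*Q/(P*b)"
    and fz: "a*(-(Q*c)/(b*t)) + b + c/(-(Q*c)/(b*t)) = b*P/Q - a*c*Q/(b*t)"
    by (simp_all add: algebra_simps)
  show ?thesis
    unfolding ft fy fz using assms(3-) by (simp add: field_simps)
qed

lemma laurent_quadratic_reciprocal_invariant:
  fixes a b c x :: "'a::field"
  assumes "a \<noteq> 0" "c \<noteq> 0"
  shows "a*(c/(a*x)) + b + c/(c/(a*x)) = a*x + b + c/x"
  using assms by (cases "x = 0") (simp_all add: field_simps)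

lemma to_fract_of_nat: "to_fract (of_nat n :: 'a::idom) = of_nat n"
  by (induct n) simp_all

lemma to_fract_of_int: "to_fract (of_int k :: 'a::idom) = of_int k"
  by (cases k rule: int_cases2) (simp_all add: to_fract_of_nat)

lemma indetT_eq_to_fract: "indetT = to_fract [:0, 1:]"
  unfolding indetT_def to_fract_def ..

lemma indetT_nonzero: "indetT \<noteq> 0"
  by (simp add: indetT_eq_to_fract)

lemma quadratic_in_indetT_nonzero:
  fixes a b c :: int
  assumes "a \<noteq> 0"
  shows "of_int a * indetT^2 + of_int b * indetT + of_int c \<noteq> (0 :: ratfun)"
proof -
  have "of_int a * indetT^2 + of_int b * indetT + of_int c
      = to_fract [:of_int c, of_int b, of_int a:]"
    by (simp add: indetT_eq_to_fract to_fract_of_int [symmetric] power2_eq_square of_int_poly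
        flip: to_fract_mult to_fract_add)
  then show ?thesis
    using assms by simp
qed

theorem mainTheorem5:
  fixes A B C :: int
  assumes "A \<noteq> 0" and "B \<noteq> 0" and "C \<noteq> 0"
  shows "(let T = indetT;
              a = of_int A; b = of_int B; c = of_int C;
              x = T;
              y = - ((a * T^2 + b * T + c) * b) / ((a * T^2 + (b + 1) * T + c) * a);
              z = - ((a * T^2 + (b + 1) * T + c) * c) / (b * T)
          in fA A B C x * fA A B C y = fA A B C z)
       \<and> (let T = indetT;
              a = of_int A; b = of_int B; c = of_int C;
              x = T;
              y = - ((a * T^2 + (b + 1) * T + c) * c) / ((a * T^2 + b * T + c) * b);
              z = - ((a * T^2 + (b + 1) * T + c) * c) / (b * T)
          in fA A B C x * fA A B C y = fA A B C z)"
proof -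
  define T a b c where "T = indetT" and "a = (of_int A :: ratfun)"
    and "b = (of_int B :: ratfun)" and "c = (of_int C :: ratfun)"
  define P Q where "P = a*T^2 + b*T + c" and "Q = a*T^2 + (b + 1)*T + c"
  have f: "fA A B C X = a*X + b + c/X" for X
    unfolding fA_def a_def b_def c_def ..
  have nonzero: "T \<noteq> 0" "a \<noteq> 0" "b \<noteq> 0" "c \<noteq> 0" "P \<noteq> 0" "Q \<noteq> 0"
    using assms quadratic_in_indetT_nonzero[of A B C] quadratic_in_indetT_nonzero[of A "B + 1" C]
    by (simp_all add: T_def a_def b_def c_def P_def Q_def indetT_nonzero)
  have first: "fA A B C T * fA A B C (-(P*b)/(Q*a)) = fA A B C (-(Q*c)/(b*T))"
    unfolding f P_def Q_def
    by (rule laurent_quadratic_product_identity) (use nonzero in \<open>simp_all add: P_def Q_def\<close>)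
  have "-(Q*c)/(P*b) = c/(a*(-(P*b)/(Q*a)))"
    using nonzero by (simp add: field_simps)
  then have "fA A B C (-(Q*c)/(P*b)) = fA A B C (-(P*b)/(Q*a))"
    unfolding f using laurent_quadratic_reciprocal_invariant nonzero(2,4) by metis
  with first show ?thesis
    unfolding Let_def T_def [symmetric] a_def [symmetric] b_def [symmetric] c_def [symmetric]
      P_def [symmetric] Q_def [symmetric]
    by simp
qed

end
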